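(* Let $\alpha\ge 0$, $\mu\ge 0$, $n\in\mathbb{N}=\{1,2,\dots\}$ and $x\in[0,\infty)$. Then (i) $T_n(1;x)=1$; (ii) $T_n(t;x)=x+\dfrac{2\alpha x^2}{n}$; (iii) $T_n(t^2;x)=x^2+\dfrac{4\alpha}{n^2}x^2+\dfrac{4\alpha}{n}x^3+\dfrac{4\alpha^2}{n^2}x^4+\dfrac{x}{n}+\dfrac{2\mu x}{n}\dfrac{e_\mu(-nx)}{e_\mu(nx)}$, where $T_n(f;x)$ denotes the operator applied to the function $t\mapsto f(t)$.
   Context: For $\mu>-\tfrac12$ define $\gamma_\mu(2k)=\dfrac{2^{2k}k!\,\Gamma(k+\mu+1/2)}{\Gamma(\mu+1/2)}$ and $\gamma_\mu(2k+1)=\dfrac{2^{2k+1}k!\,\Gamma(k+\mu+3/2)}{\Gamma(\mu+1/2)}$, $k\ge0$; $e_\mu(x)=\sum_{k\ge0} x^k/\gamma_\mu(k)$; $\theta_k=0$ if $k$ is even and $\theta_k=1$ if $k$ is odd. Let $h_k^\mu(\xi,\alpha)=\gamma_\mu(k)\sum_{j=0}^{\lfloor k/2\rfloor}\dfrac{\alpha^j\xi^{k-2j}}{j!\,\gamma_\mu(k-2j)}$ (so $\sum_k h_k^\mu(\xi,\alpha)t^k/\gamma_\mu(k)=e^{\alpha t^2}e_\mu(\xi t)$). For $\alpha\ge0,\mu\ge0$, $n\in\mathbb{N}$ and $x\in[0,\infty)$ define $$T_n(f;x)=\frac{1}{e^{\alpha x^2}e_\mu(nx)}\sum_{k=0}^\infty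 \frac{h_k^\mu(n,\alpha)}{\gamma_\mu(k)}x^k f\!\left(\frac{k+2\mu\theta_k}{n}\right).$$ *)

theory Defs
  imports "HOL-Analysis.Analysis"
begin

definition gamma_mu :: "real \<Rightarrow> nat \<Rightarrow> real" where
  "gamma_mu \<mu> k =
     (if even k
      then 2 ^ k * fact (k div 2) * Gamma (real (k div 2) + \<mu> + 1/2) / Gamma (\<mu> + 1/2)
      else 2 ^ k * fact (k div 2) * Gamma (real (k div 2) + \<mu> + 3/2) / Gamma (\<mu> + 1/2))"

definition e_mu :: "real \<Rightarrow> real \<Rightarrow> real" where
  "e_mu \<mu> x = (\<Sum>k. x ^ k / gamma_mu \<mu> k)"

definition theta :: "nat \<Rightarrow> real" where
  "theta k = (if even k then 0 else 1)"

definition h_mu :: "real \<Rightarrow> nat \<Rightarrow> real \<Rightarrow> real \<Rightarrow> real" where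
  "h_mu \<mu> k \<xi> \<alpha> =
     gamma_mu \<mu> k * (\<Sum>j\<le>k div 2. \<alpha> ^ j * \<xi> ^ (k - 2 * j) / (fact j * gamma_mu \<mu> (k - 2 * j)))"

definition T_op :: "real \<Rightarrow> real \<Rightarrow> nat \<Rightarrow> (real \<Rightarrow> real) \<Rightarrow> real \<Rightarrow> real" where
  "T_op \<alpha> \<mu> n f x =
     (1 / (exp (\<alpha> * x\<^sup>2) * e_mu \<mu> (real n * x))) *
     (\<Sum>k. h_mu \<mu> k (real n) \<alpha> / gamma_mu \<mu> k * x ^ k *
           f ((real k + 2 * \<mu> * theta k) / real n))"

end

theory Submission
  imports Defs
begin

text \<open>
  Put \<open>y = \<alpha>x\<^sup>2\<close>, \<open>z = nx\<close> and \<open>w(k) = k + 2\<mu>\<theta>\<^sub>k\<close>. The coefficient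
  \<open>h\<^sub>k(n,\<alpha>) x\<^sup>k / \<gamma>(k)\<close> of \<open>T\<^sub>n\<close> is the \<open>k\<close>-th coefficient of the product of the
  exponential series of \<open>y\<close>, spread over the even indices, with the series of \<open>e\<^sub>\<mu>(z)\<close>;
  its total is \<open>e\<^sup>y e\<^sub>\<mu>(z)\<close>, which gives (i). Since \<open>w(2j + i) = 2j + w(i)\<close>, the first
  two moments of the nodes \<open>w(k)/n\<close> reduce to those of the two factor series. For
  the \<open>e\<^sub>\<mu>\<close> series they follow from \<open>\<gamma>(k+1) = w(k+1) \<gamma>(k)\<close>: shifting the index gives
  \<open>\<Sum> w(k) z\<^sup>k/\<gamma>(k) = z e\<^sub>\<mu>(z)\<close>, and as \<open>w(k+1) - w(k) = 1 + 2\<mu>(-1)\<^sup>k\<close> the second moment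
  picks up the term \<open>2\<mu> z e\<^sub>\<mu>(-z)\<close>. For \<open>\<mu> = 0\<close> the \<open>e\<^sub>\<mu>\<close> series is the exponential
  series, so the same computation covers the first factor.
\<close>

definition weight_mu :: "real \<Rightarrow> nat \<Rightarrow> real" where
  "weight_mu \<mu> k = real k + 2 * \<mu> * theta k"

lemma weight_mu_0 [simp]: "weight_mu \<mu> 0 = 0"
  by (simp add: weight_mu_def theta_def)

lemma weight_mu_zero_eq_of_nat [simp]: "weight_mu 0 k = real k"
  by (simp add: weight_mu_def)

lemma weight_mu_Suc: "weight_mu \<mu> (Suc k) = weight_mu \<mu> k + 1 + 2 * \<mu> * (-1) ^ k"
  by (cases "even k") (auto simp: weight_mu_def theta_def)

lemma weight_mu_add_even: "weight_mu \<mu> (2 * j + i) = 2 * real j + weight_mu \<mu> i"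
  by (simp add: weight_mu_def theta_def)

lemma weight_mu_ge: "\<mu> \<ge> 0 \<Longrightarrow> real k \<le> weight_mu \<mu> k"
  by (simp add: weight_mu_def theta_def)

lemma gamma_mu_0:
  assumes "\<mu> > -1/2"
  shows "gamma_mu \<mu> 0 = 1"
proof -
  have "Gamma (\<mu> + 1/2) > 0"
    using assms by (intro Gamma_real_pos) simp
  then show ?thesis
    by (simp add: gamma_mu_def)
qed

lemma gamma_mu_Suc:
  assumes "\<mu> > -1/2"
  shows "gamma_mu \<mu> (Suc k) = weight_mu \<mu> (Suc k) * gamma_mu \<mu> k"
proof (cases "even k")
  case True
  then obtain m where k: "k = 2 * m" by blast
  have "Gamma (real m + \<mu> + 3/2) = (real m + \<mu> + 1/2) * Gamma (real m + \<mu> + 1/2)"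
    using Gamma_plus1[of "real m + \<mu> + 1/2"] assms
    by (simp add: add.assoc nonpos_Ints_def)
  then show ?thesis
    by (simp add: k gamma_mu_def weight_mu_def theta_def)
next
  case False
  then obtain m where k: "k = 2 * m + 1" by (metis oddE)
  show ?thesis
    by (simp add: k gamma_mu_def weight_mu_def theta_def field_simps)
qed

lemma fact_le_gamma_mu: "\<mu> \<ge> 0 \<Longrightarrow> fact k \<le> gamma_mu \<mu> k"
proof (induction k)
  case 0
  then show ?case by (simp add: gamma_mu_0)
next
  case (Suc k)
  have "fact (Suc k) = real (Suc k) * fact k"
    by simp
  also have "\<dots> \<le> weight_mu \<mu> (Suc k) * gamma_mu \<mu> k"
    using Suc weight_mu_ge[of \<mu> "Suc k"] by (intro mult_mono) auto
  finally show ?case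
    using Suc.prems by (simp add: gamma_mu_Suc)
qed

lemma gamma_mu_pos: "\<mu> \<ge> 0 \<Longrightarrow> gamma_mu \<mu> k > 0"
  using fact_le_gamma_mu[of \<mu> k] fact_gt_zero[where 'a=real, of k] by linarith

lemma gamma_mu_zero_eq_fact: "gamma_mu 0 k = fact k"
  by (induction k) (simp_all add: gamma_mu_0 gamma_mu_Suc)

lemma summable_e_mu:
  assumes "\<mu> \<ge> 0"
  shows "summable (\<lambda>k. norm (z ^ k / gamma_mu \<mu> k))"
proof (rule summable_comparison_test)
  show "summable (\<lambda>k. inverse (fact k) * \<bar>z\<bar> ^ k)"
    by (rule summable_exp)
  have "norm (norm (z ^ k / gamma_mu \<mu> k)) \<le> inverse (fact k) * \<bar>z\<bar> ^ k" for k
  proof -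
    have "\<bar>z\<bar> ^ k / gamma_mu \<mu> k \<le> \<bar>z\<bar> ^ k / fact k"
      using assms by (intro divide_left_mono fact_le_gamma_mu mult_pos_pos gamma_mu_pos) simp_all
    then show ?thesis
      using gamma_mu_pos[OF assms, of k] by (simp add: abs_mult power_abs divide_inverse mult.commute)
  qed
  then show "\<exists>N. \<forall>k\<ge>N. norm (norm (z ^ k / gamma_mu \<mu> k)) \<le> inverse (fact k) * \<bar>z\<bar> ^ k"
    by blast
qed

lemma e_mu_sums: "\<mu> \<ge> 0 \<Longrightarrow> (\<lambda>k. z ^ k / gamma_mu \<mu> k) sums e_mu \<mu> z"
  unfolding e_mu_def by (rule summable_sums[OF summable_norm_cancel[OF summable_e_mu]])

lemma exp_series_sums: "(\<lambda>k. z ^ k / fact k) sums exp (z::real)"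
  using exp_converges[of z] by (simp add: divide_inverse mult.commute)

lemma e_mu_zero_eq_exp: "e_mu 0 z = exp z"
  using e_mu_sums[of 0 z] exp_series_sums[of z] by (simp add: gamma_mu_zero_eq_fact sums_unique2)

lemma e_mu_pos:
  assumes "\<mu> \<ge> 0" and "z \<ge> 0"
  shows "e_mu \<mu> z > 0"
  unfolding e_mu_def
proof (rule suminf_pos2)
  show "summable (\<lambda>k. z ^ k / gamma_mu \<mu> k)"
    using e_mu_sums[OF assms(1)] by (rule sums_summable)
  show "0 \<le> z ^ k / gamma_mu \<mu> k" for k
    using assms gamma_mu_pos[OF assms(1), of k] by simp
  show "0 < z ^ 0 / gamma_mu \<mu> 0"
    using assms by (simp add: gamma_mu_0)
qed

lemma weight_mu_mult_e_mu_term_Suc: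
  assumes "\<mu> \<ge> 0"
  shows "weight_mu \<mu> (Suc k) * (z ^ Suc k / gamma_mu \<mu> (Suc k)) = z * (z ^ k / gamma_mu \<mu> k)"
proof -
  have "weight_mu \<mu> (Suc k) > 0"
    using weight_mu_ge[OF assms, of "Suc k"] by linarith
  then show ?thesis
    using assms gamma_mu_pos[OF assms, of k] by (simp add: gamma_mu_Suc field_simps)
qed

lemma e_mu_weight_sums:
  assumes "\<mu> \<ge> 0"
  shows "(\<lambda>k. weight_mu \<mu> k * (z ^ k / gamma_mu \<mu> k)) sums (z * e_mu \<mu> z)"
proof -
  have "(\<lambda>k. weight_mu \<mu> (Suc k) * (z ^ Suc k / gamma_mu \<mu> (Suc k))) sums (z * e_mu \<mu> z)"
    unfolding weight_mu_mult_e_mu_term_Suc[OF assms] by (intro sums_mult e_mu_sums assms)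
  from sums_Suc[OF this] show ?thesis
    by simp
qed

lemma e_mu_weight_sq_sums:
  assumes "\<mu> \<ge> 0"
  shows "(\<lambda>k. (weight_mu \<mu> k)\<^sup>2 * (z ^ k / gamma_mu \<mu> k)) sums
           (z * ((z + 1) * e_mu \<mu> z + 2 * \<mu> * e_mu \<mu> (-z)))"
proof -
  have term_Suc: "(weight_mu \<mu> (Suc k))\<^sup>2 * (z ^ Suc k / gamma_mu \<mu> (Suc k)) =
      z * (weight_mu \<mu> k * (z ^ k / gamma_mu \<mu> k) + z ^ k / gamma_mu \<mu> k
           + 2 * \<mu> * ((-z) ^ k / gamma_mu \<mu> k))" for k
  proof -
    have "(weight_mu \<mu> (Suc k))\<^sup>2 * (z ^ Suc k / gamma_mu \<mu> (Suc k)) =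
        weight_mu \<mu> (Suc k) * (weight_mu \<mu> (Suc k) * (z ^ Suc k / gamma_mu \<mu> (Suc k)))"
      by (simp add: power2_eq_square)
    also have "\<dots> = weight_mu \<mu> (Suc k) * (z * (z ^ k / gamma_mu \<mu> k))"
      by (simp only: weight_mu_mult_e_mu_term_Suc[OF assms])
    also have "\<dots> = z * (weight_mu \<mu> k * (z ^ k / gamma_mu \<mu> k) + z ^ k / gamma_mu \<mu> k
           + 2 * \<mu> * ((-z) ^ k / gamma_mu \<mu> k))"
      unfolding weight_mu_Suc power_minus[of z]
      by (simp add: distrib_left distrib_right add_divide_distrib mult_ac)
    finally show ?thesis .
  qed
  have "(\<lambda>k. (weight_mu \<mu> (Suc k))\<^sup>2 * (z ^ Suc k / gamma_mu \<mu> (Suc k))) sums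
           (z * (z * e_mu \<mu> z + e_mu \<mu> z + 2 * \<mu> * e_mu \<mu> (-z)))"
    unfolding term_Suc by (intro sums_mult sums_add e_mu_weight_sums e_mu_sums assms)
  from sums_Suc[OF this] show ?thesis
    by (simp add: distrib_left distrib_right mult_ac)
qed

lemma exp_weight_sums: "(\<lambda>j. real j * (y ^ j / fact j)) sums (y * exp y)"
  using e_mu_weight_sums[of 0 y] by (simp add: gamma_mu_zero_eq_fact e_mu_zero_eq_exp)

lemma exp_weight_sq_sums: "(\<lambda>j. (real j)\<^sup>2 * (y ^ j / fact j)) sums (y * (y + 1) * exp y)"
  using e_mu_weight_sq_sums[of 0 y] by (simp add: gamma_mu_zero_eq_fact e_mu_zero_eq_exp mult.assoc)

definition even_conv :: "(nat \<Rightarrow> 'a::semiring_0) \<Rightarrow> (nat \<Rightarrow> 'a) \<Rightarrow> nat \<Rightarrow> 'a" where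
  "even_conv p q k = (\<Sum>j\<le>k div 2. p j * q (k - 2 * j))"

lemma sums_even_conv:
  fixes p q :: "nat \<Rightarrow> 'a::{real_normed_algebra,banach}"
  assumes p: "summable (\<lambda>k. norm (p k))" and q: "summable (\<lambda>k. norm (q k))"
  shows "even_conv p q sums ((\<Sum>k. p k) * (\<Sum>k. q k))"
proof -
  define p2 where "p2 m = (if even m then p (m div 2) else 0)" for m
  have double: "strict_mono (\<lambda>j::nat. 2 * j)"
    by (simp add: strict_mono_def)
  have outside: "m \<notin> range (\<lambda>j. 2 * j) \<Longrightarrow> p2 m = 0" for m
    by (auto simp: p2_def)
  have p2_double: "p2 (2 * j) = p j" for j
    by (simp add: p2_def)
  have "summable (\<lambda>m. norm (p2 m))"
    using summable_mono_reindex[OF double, of "\<lambda>m. norm (p2 m)"] outside p by (simp add: p2_double)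
  moreover have "(\<Sum>m. p2 m) = (\<Sum>k. p k)"
    using suminf_mono_reindex[OF double, of p2] outside by (simp add: p2_double)
  moreover have "(\<Sum>i\<le>k. p2 i * q (k - i)) = even_conv p q k" for k
  proof -
    have "(\<Sum>i\<le>k. p2 i * q (k - i)) = (\<Sum>i\<in>(\<lambda>j. 2 * j) ` {..k div 2}. p2 i * q (k - i))"
      by (rule sum.mono_neutral_right) (auto simp: p2_def)
    also have "\<dots> = even_conv p q k"
      by (simp add: sum.reindex inj_on_def even_conv_def p2_def)
    finally show ?thesis .
  qed
  ultimately show ?thesis
    using Cauchy_product_sums[of p2 q] q by simp
qed

lemma sums_even_conv_nonneg:
  fixes p q :: "nat \<Rightarrow> real"
  assumes "p sums s" and "q sums t" and "\<And>j. p j \<ge> 0" and "\<And>i. q i \<ge> 0"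
  shows "even_conv p q sums (s * t)"
  using sums_even_conv[of p q] assms by (simp add: sums_iff)

lemma weight_mu_split_even:
  assumes "j \<le> k div 2"
  shows "weight_mu \<mu> k = 2 * real j + weight_mu \<mu> (k - 2 * j)"
proof -
  have "k = 2 * j + (k - 2 * j)"
    using assms by simp
  then show ?thesis
    by (metis weight_mu_add_even)
qed

lemma even_conv_mult_weight_mu:
  fixes p q :: "nat \<Rightarrow> real"
  shows "even_conv p q k * weight_mu \<mu> k =
           even_conv (\<lambda>j. 2 * real j * p j) q k + even_conv p (\<lambda>i. weight_mu \<mu> i * q i) k"
  unfolding even_conv_def sum_distrib_right sum.distrib[symmetric]
  by (rule sum.cong) (simp_all add: weight_mu_split_even[of _ k] algebra_simps)

lemma even_conv_mult_weight_mu_sq: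
  fixes p q :: "nat \<Rightarrow> real"
  shows "even_conv p q k * (weight_mu \<mu> k)\<^sup>2 =
           even_conv (\<lambda>j. 4 * (real j)\<^sup>2 * p j) q k
           + even_conv (\<lambda>j. 4 * real j * p j) (\<lambda>i. weight_mu \<mu> i * q i) k
           + even_conv p (\<lambda>i. (weight_mu \<mu> i)\<^sup>2 * q i) k"
  unfolding even_conv_def sum_distrib_right sum.distrib[symmetric]
  by (rule sum.cong) (simp_all add: weight_mu_split_even[of _ k] algebra_simps power2_eq_square)

lemma h_mu_term_eq_even_conv:
  assumes "gamma_mu \<mu> k \<noteq> 0"
  shows "h_mu \<mu> k \<xi> \<alpha> / gamma_mu \<mu> k * x ^ k =
           even_conv (\<lambda>j. (\<alpha> * x\<^sup>2) ^ j / fact j) (\<lambda>i. (\<xi> * x) ^ i / gamma_mu \<mu> i) k"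
proof -
  have "x ^ k = (x\<^sup>2) ^ j * x ^ (k - 2 * j)" if "j \<le> k div 2" for j
  proof -
    have "k = 2 * j + (k - 2 * j)"
      using that by simp
    then show ?thesis
      by (metis power_add power_mult)
  qed
  then have "(\<Sum>j\<le>k div 2. \<alpha> ^ j * \<xi> ^ (k - 2 * j) / (fact j * gamma_mu \<mu> (k - 2 * j))) * x ^ k =
      even_conv (\<lambda>j. (\<alpha> * x\<^sup>2) ^ j / fact j) (\<lambda>i. (\<xi> * x) ^ i / gamma_mu \<mu> i) k"
    unfolding even_conv_def sum_distrib_right by (intro sum.cong) (simp_all add: power_mult_distrib)
  then show ?thesis
    using assms by (simp add: h_mu_def)
qed

definition hermite_coeff :: "real \<Rightarrow> real \<Rightarrow> real \<Rightarrow> nat \<Rightarrow> real" where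
  "hermite_coeff \<mu> y z = even_conv (\<lambda>j. y ^ j / fact j) (\<lambda>i. z ^ i / gamma_mu \<mu> i)"

context
  fixes \<mu> y z :: real
  assumes \<mu>: "\<mu> \<ge> 0" and y: "y \<ge> 0" and z: "z \<ge> 0"
begin

private lemma exp_term_nonneg: "y ^ j / fact j \<ge> 0"
  using y by simp

private lemma e_mu_term_nonneg: "z ^ i / gamma_mu \<mu> i \<ge> 0"
  using z gamma_mu_pos[OF \<mu>, of i] by simp

private lemma weight_mu_nonneg: "weight_mu \<mu> i \<ge> 0"
  using weight_mu_ge[OF \<mu>, of i] by linarith

lemma hermite_coeff_sums: "hermite_coeff \<mu> y z sums (exp y * e_mu \<mu> z)"
  unfolding hermite_coeff_def
  by (intro sums_even_conv_nonneg exp_term_nonneg e_mu_term_nonneg e_mu_sums[OF \<mu>])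
    (rule exp_series_sums)

lemma hermite_coeff_weight_sums:
  "(\<lambda>k. hermite_coeff \<mu> y z k * weight_mu \<mu> k) sums ((2 * y + z) * (exp y * e_mu \<mu> z))"
proof -
  have "(\<lambda>j. 2 * real j * (y ^ j / fact j)) sums (2 * (y * exp y))"
    using sums_mult[OF exp_weight_sums, of 2] by (simp add: mult.assoc)
  then have "(\<lambda>k. hermite_coeff \<mu> y z k * weight_mu \<mu> k) sums
      (2 * (y * exp y) * e_mu \<mu> z + exp y * (z * e_mu \<mu> z))"
    unfolding hermite_coeff_def even_conv_mult_weight_mu
    using exp_term_nonneg e_mu_term_nonneg weight_mu_nonneg
    by (intro sums_add sums_even_conv_nonneg e_mu_sums e_mu_weight_sums \<mu>
        exp_series_sums mult_nonneg_nonneg) simp_all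
  then show ?thesis
    by (simp add: algebra_simps)
qed

lemma hermite_coeff_weight_sq_sums:
  "(\<lambda>k. hermite_coeff \<mu> y z k * (weight_mu \<mu> k)\<^sup>2) sums
     (((2 * y + z)\<^sup>2 + 4 * y + z) * (exp y * e_mu \<mu> z) + 2 * \<mu> * z * exp y * e_mu \<mu> (-z))"
proof -
  have "(\<lambda>j. 4 * (real j)\<^sup>2 * (y ^ j / fact j)) sums (4 * (y * (y + 1) * exp y))"
    using sums_mult[OF exp_weight_sq_sums, of 4] by (simp add: mult.assoc)
  moreover have "(\<lambda>j. 4 * real j * (y ^ j / fact j)) sums (4 * (y * exp y))"
    using sums_mult[OF exp_weight_sums, of 4] by (simp add: mult.assoc)
  ultimately have "(\<lambda>k. hermite_coeff \<mu> y z k * (weight_mu \<mu> k)\<^sup>2) sums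
      (4 * (y * (y + 1) * exp y) * e_mu \<mu> z + 4 * (y * exp y) * (z * e_mu \<mu> z)
       + exp y * (z * ((z + 1) * e_mu \<mu> z + 2 * \<mu> * e_mu \<mu> (-z))))"
    unfolding hermite_coeff_def even_conv_mult_weight_mu_sq
    using exp_term_nonneg e_mu_term_nonneg weight_mu_nonneg
    by (intro sums_add sums_even_conv_nonneg e_mu_sums e_mu_weight_sums e_mu_weight_sq_sums \<mu>
        exp_series_sums mult_nonneg_nonneg) simp_all
  then show ?thesis
    by (simp add: algebra_simps power2_eq_square)
qed

end

lemma T_op_eq_hermite_series:
  assumes "\<mu> \<ge> 0"
  shows "T_op \<alpha> \<mu> n f x =
           (\<Sum>k. hermite_coeff \<mu> (\<alpha> * x\<^sup>2) (real n * x) k * f (weight_mu \<mu> k / real n))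
           / (exp (\<alpha> * x\<^sup>2) * e_mu \<mu> (real n * x))"
  using h_mu_term_eq_even_conv[OF less_imp_neq[OF gamma_mu_pos[OF assms], symmetric]]
  by (simp add: T_op_def hermite_coeff_def weight_mu_def)

context
  fixes \<alpha> \<mu> x :: real and n :: nat
  assumes \<alpha>: "\<alpha> \<ge> 0" and \<mu>: "\<mu> \<ge> 0" and n: "n \<ge> 1" and x: "x \<ge> 0"
begin

private lemma T_op_eqI:
  assumes "(\<lambda>k. hermite_coeff \<mu> (\<alpha> * x\<^sup>2) (real n * x) k * f (weight_mu \<mu> k / real n)) sums
             (S * (exp (\<alpha> * x\<^sup>2) * e_mu \<mu> (real n * x)))"
  shows "T_op \<alpha> \<mu> n f x = S"
proof -
  have "e_mu \<mu> (real n * x) > 0"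
    using e_mu_pos[OF \<mu>] x by simp
  then show ?thesis
    by (simp add: T_op_eq_hermite_series[OF \<mu>] flip: sums_unique[OF assms])
qed

lemma T_op_one: "T_op \<alpha> \<mu> n (\<lambda>t. 1) x = 1"
  using hermite_coeff_sums[OF \<mu>, of "\<alpha> * x\<^sup>2" "real n * x"] \<alpha> x by (intro T_op_eqI) simp

lemma T_op_id: "T_op \<alpha> \<mu> n (\<lambda>t. t) x = x + 2 * \<alpha> * x\<^sup>2 / real n"
proof (rule T_op_eqI)
  have "(2 * (\<alpha> * x\<^sup>2) + real n * x) * E / real n = (x + 2 * \<alpha> * x\<^sup>2 / real n) * E" for E
    using n by (simp add: field_simps)
  then show "(\<lambda>k. hermite_coeff \<mu> (\<alpha> * x\<^sup>2) (real n * x) k * (weight_mu \<mu> k / real n)) sums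
      ((x + 2 * \<alpha> * x\<^sup>2 / real n) * (exp (\<alpha> * x\<^sup>2) * e_mu \<mu> (real n * x)))"
    using sums_divide[OF hermite_coeff_weight_sums[OF \<mu>], of "\<alpha> * x\<^sup>2" "real n * x" "real n"] \<alpha> x
    by (simp only: times_divide_eq_right) simp
qed

lemma T_op_square:
  "T_op \<alpha> \<mu> n (\<lambda>t. t\<^sup>2) x =
     x\<^sup>2 + 4 * \<alpha> / (real n)\<^sup>2 * x\<^sup>2 + 4 * \<alpha> / real n * x ^ 3
     + 4 * \<alpha>\<^sup>2 / (real n)\<^sup>2 * x ^ 4 + x / real n
     + 2 * \<mu> * x / real n * (e_mu \<mu> (- (real n * x)) / e_mu \<mu> (real n * x))"
  (is "_ = ?S")
proof (rule T_op_eqI)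
  let ?y = "\<alpha> * x\<^sup>2" and ?z = "real n * x"
  have "e_mu \<mu> ?z > 0"
    using e_mu_pos[OF \<mu>] x by simp
  then have "(((2 * ?y + ?z)\<^sup>2 + 4 * ?y + ?z) * (exp ?y * e_mu \<mu> ?z)
        + 2 * \<mu> * ?z * exp ?y * e_mu \<mu> (- ?z)) / (real n)\<^sup>2 = ?S * (exp ?y * e_mu \<mu> ?z)"
    using n by (simp add: field_simps power2_eq_square power3_eq_cube power4_eq_xxxx)
  then show "(\<lambda>k. hermite_coeff \<mu> ?y ?z k * (weight_mu \<mu> k / real n)\<^sup>2) sums (?S * (exp ?y * e_mu \<mu> ?z))"
    using sums_divide[OF hermite_coeff_weight_sq_sums[OF \<mu>], of ?y ?z "(real n)\<^sup>2"] \<alpha> x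
    by (simp only: power_divide times_divide_eq_right) simp
qed

end

theorem lemma3:
  fixes \<alpha> \<mu> x :: real and n :: nat
  assumes "\<alpha> \<ge> 0" and "\<mu> \<ge> 0" and "n \<ge> 1" and "x \<ge> 0"
  shows "T_op \<alpha> \<mu> n (\<lambda>t. 1) x = 1 \<and>
         T_op \<alpha> \<mu> n (\<lambda>t. t) x = x + 2 * \<alpha> * x\<^sup>2 / real n \<and>
         T_op \<alpha> \<mu> n (\<lambda>t. t\<^sup>2) x =
           x\<^sup>2 + 4 * \<alpha> / (real n)\<^sup>2 * x\<^sup>2 + 4 * \<alpha> / real n * x ^ 3
           + 4 * \<alpha>\<^sup>2 / (real n)\<^sup>2 * x ^ 4 + x / real n
           + 2 * \<mu> * x / real n * (e_mu \<mu> (- (real n * x)) / e_mu \<mu> (real n * x))"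
  using T_op_one[OF assms] T_op_id[OF assms] T_op_square[OF assms] by blast

end
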